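(* If $n>2$ is odd, then all eigenvalues of the operator $c_1\star$ of quantum multiplication by the first Chern class acting on the small quantum cohomology $\operatorname{QH}(\operatorname{Gr}(2,n))$ have algebraic multiplicity one.
   Context: $\operatorname{QH}(\operatorname{Gr}(2,n))$ denotes the small quantum cohomology of the complex Grassmannian of 2-planes in $\mathbb{C}^n$ with complex coefficients (quantum parameter specialized to $1$, as in the monotone setting); it has complex dimension $\binom{n}{2}$. *)

theory Defs
  imports "Jordan_Normal_Form.Char_Poly"
begin

text \<open>Schubert basis of H^*(Gr(2,n)): partitions (a,b) with n-2 >= a >= b >= 0,
  listed in a fixed order.\<close>
definition gr2_parts :: "nat \<Rightarrow> (nat \<times> nat) list" where
  "gr2_parts n = concat (map (\<lambda>a. map (\<lambda>b. (a, b)) [0..<Suc a]) [0..<n - 1])"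

text \<open>Coefficient of sigma_mu in sigma_1 * sigma_lambda in QH(Gr(2,n)) with q = 1
  (quantum Pieri rule of Bertram): classical Pieri terms (add one box inside the
  2 x (n-2) rectangle) plus the quantum term q sigma_(b-1,0) when a = n-2 and b >= 1.\<close>
definition c1_coeff :: "nat \<Rightarrow> nat \<times> nat \<Rightarrow> nat \<times> nat \<Rightarrow> complex" where
  "c1_coeff n mu lam = (case lam of (a, b) \<Rightarrow>
      (if mu = (a + 1, b) \<and> a + 1 \<le> n - 2 then 1 else 0)
    + (if mu = (a, b + 1) \<and> b + 1 \<le> a then 1 else 0)
    + (if a = n - 2 \<and> 1 \<le> b \<and> mu = (b - 1, 0) then 1 else 0))"

text \<open>Matrix of the operator c_1 * on QH(Gr(2,n)) in the Schubert basis
  (column j = image of the j-th basis vector).\<close>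
definition c1_star_mat :: "nat \<Rightarrow> complex mat" where
  "c1_star_mat n = mat (length (gr2_parts n)) (length (gr2_parts n))
     (\<lambda>(i, j). c1_coeff n (gr2_parts n ! i) (gr2_parts n ! j))"

end

theory Submission
  imports Defs
begin

text \<open>
  Write the Schubert class of (a, b) as the alternant x^(a+1) y^b - y^(a+1) x^b.
  Multiplying by x + y adds a box in either row, which is the classical Pieri rule, and
  when x^n = y^n = -1 the box falling off the 2 \<times> (n - 2) rectangle reappears as the quantum
  term. Hence for every pair of distinct n-th roots x, y of -1 the alternants form a left
  eigenvector of c1\<star> with eigenvalue x + y. For odd n these sums are pairwise distinct:
  x, y lie on the unit circle and x + y \<noteq> 0, so x + y determines x y = (x + y) / cnj (x + y)
  and therefore {x, y}. This gives n choose 2 distinct roots of a characteristic polynomial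
  of degree n choose 2, so each of them is simple.
\<close>

lemma set_gr2_parts: "set (gr2_parts n) = {(a, b). b \<le> a \<and> a < n - 1}"
  by (force simp: gr2_parts_def simp del: upt_Suc)

lemma distinct_gr2_parts: "distinct (gr2_parts n)"
  unfolding gr2_parts_def
  by (intro distinct_concat)
    (auto simp: distinct_map inj_on_def dest: arg_cong[where f = length] simp del: upt_Suc)

lemma length_gr2_parts: "length (gr2_parts n) = n choose 2"
proof -
  have "length (gr2_parts n) = (\<Sum>a<n - 1. Suc a)"
    by (simp add: gr2_parts_def length_concat sum_list_sum_nth atLeast0LessThan del: upt_Suc)
  also have "\<dots> = \<Sum>{0..<n}"
    by (cases n) (simp_all only: atLeast0LessThan sum.lessThan_Suc_shift, simp_all)
  finally show ?thesis
    by (simp add: Sum_Ico_nat choose_two)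
qed

lemma order_eq_1_if_degree_le_card_roots:
  fixes p :: "'a::idom poly"
  assumes "p \<noteq> 0" and "S \<subseteq> {z. poly p z = 0}" and "degree p \<le> card S" and "poly p e = 0"
  shows "order e p = 1"
proof -
  let ?M = "proots p"
  have "card (set_mset ?M) + (count ?M e - 1) \<le> card (set_mset ?M) + (\<Sum>z\<in>set_mset ?M. count ?M z - 1)"
    using assms(1,4) by (intro add_left_mono member_le_sum) (auto simp: poly_roots_finite)
  also have "\<dots> = (\<Sum>z\<in>set_mset ?M. 1 + (count ?M z - 1))"
    by (simp only: sum.distrib card_eq_sum)
  also have "\<dots> = size ?M"
    by (simp add: size_multiset_overloaded_eq)
  also have "\<dots> \<le> card S"
    using size_proots_le[of p] assms(3) by linarith
  also have "\<dots> \<le> card (set_mset ?M)"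
    using assms(1,2) by (intro card_mono) (auto simp: poly_roots_finite)
  finally have "order e p \<le> 1"
    using assms(1) by simp
  moreover have "order e p \<noteq> 0"
    using assms(1,4) by (simp add: order_root)
  ultimately show ?thesis
    by linarith
qed

lemma eigenvalue_transpose_mat:
  fixes A :: "'a::field mat"
  assumes "A \<in> carrier_mat n n"
  shows "eigenvalue (transpose_mat A) k \<longleftrightarrow> eigenvalue A k"
  using assms by (simp add: eigenvalue_root_char_poly[of _ n])

lemma transpose_mat_mult_vec_list_indexed:
  assumes "distinct L" and "j < length L"
  shows "(transpose_mat (mat (length L) (length L) (\<lambda>(i, j). f (L ! i) (L ! j)))
            *\<^sub>v vec (length L) (\<lambda>i. g (L ! i))) $ j = (\<Sum>p\<in>set L. f p (L ! j) * g p)"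
proof -
  have "(transpose_mat (mat (length L) (length L) (\<lambda>(i, j). f (L ! i) (L ! j)))
            *\<^sub>v vec (length L) (\<lambda>i. g (L ! i))) $ j = (\<Sum>i<length L. f (L ! i) (L ! j) * g (L ! i))"
    using assms(2) by (simp add: scalar_prod_def atLeast0LessThan)
  also have "\<dots> = sum_list (map (\<lambda>p. f p (L ! j) * g p) L)"
    by (simp add: sum_list_sum_nth atLeast0LessThan)
  also have "\<dots> = (\<Sum>p\<in>set L. f p (L ! j) * g p)"
    using assms(1) by (simp add: sum_list_distinct_conv_sum_set)
  finally show ?thesis .
qed

lemma sum_delta_conj:
  fixes g :: "'a \<Rightarrow> 'b::semiring_1"
  assumes "finite S"
  shows "(\<Sum>p\<in>S. (if p = t \<and> C then 1 else 0) * g p) = (if C \<and> t \<in> S then g t else 0)"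
  using assms by (simp add: if_distrib[of "\<lambda>c. c * _"] flip: if_if_eq_conj cong: if_cong)

lemma sum_c1_coeff:
  assumes "(a, b) \<in> set (gr2_parts n)"
  shows "(\<Sum>p\<in>set (gr2_parts n). c1_coeff n p (a, b) * g p) =
     (if a + 1 \<le> n - 2 then g (a + 1, b) else 0) + (if a = n - 2 \<and> 1 \<le> b then g (b - 1, 0) else 0)
       + (if b + 1 \<le> a then g (a, b + 1) else 0)"
proof -
  have "(\<Sum>p\<in>set (gr2_parts n). c1_coeff n p (a, b) * g p) =
      (\<Sum>p\<in>set (gr2_parts n). (if p = (a + 1, b) \<and> a + 1 \<le> n - 2 then 1 else 0) * g p)
    + (\<Sum>p\<in>set (gr2_parts n). (if p = (b - 1, 0) \<and> a = n - 2 \<and> 1 \<le> b then 1 else 0) * g p)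
    + (\<Sum>p\<in>set (gr2_parts n). (if p = (a, b + 1) \<and> b + 1 \<le> a then 1 else 0) * g p)"
    unfolding c1_coeff_def by (simp add: distrib_right sum.distrib conj_ac add_ac)
  then show ?thesis
    using assms unfolding sum_delta_conj[OF finite_set] by (auto simp: set_gr2_parts)
qed

text \<open>The alternant of (a, b) is (x - y) times the Schur polynomial of (a, b) in x, y.\<close>

definition alternant :: "complex \<Rightarrow> complex \<Rightarrow> nat \<times> nat \<Rightarrow> complex" where
  "alternant x y = (\<lambda>(a, b). x ^ (a + 1) * y ^ b - y ^ (a + 1) * x ^ b)"

lemma alternant_pieri: "(x + y) * alternant x y (a, b) = alternant x y (a + 1, b) + alternant x y (a, b + 1)"
  by (simp add: alternant_def algebra_simps)

lemma alternant_diagonal: "alternant x y (a, a + 1) = 0"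
  by (simp add: alternant_def algebra_simps)

lemma sum_c1_coeff_alternant:
  assumes "(a, b) \<in> set (gr2_parts n)" and "x ^ n = -1" and "y ^ n = -1"
  shows "(\<Sum>p\<in>set (gr2_parts n). c1_coeff n p (a, b) * alternant x y p) = (x + y) * alternant x y (a, b)"
proof -
  from assms(1) have ab: "b \<le> a" "a < n - 1"
    by (auto simp: set_gr2_parts)
  have right: "(if b + 1 \<le> a then alternant x y (a, b + 1) else 0) = alternant x y (a, b + 1)"
    using ab(1) alternant_diagonal[of x y a] by (cases "b = a") auto
  have up: "(if a + 1 \<le> n - 2 then alternant x y (a + 1, b) else 0)
      + (if a = n - 2 \<and> 1 \<le> b then alternant x y (b - 1, 0) else 0) = alternant x y (a + 1, b)"
  proof (cases "a + 1 \<le> n - 2")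
    case False
    \<comment> \<open>the box added outside the rectangle is the quantum term, since x^n = y^n = -1\<close>
    then have "a + 2 = n"
      using ab(2) by linarith
    have "alternant x y (a + 1, b) = x ^ (a + 2) * y ^ b - y ^ (a + 2) * x ^ b"
      by (simp add: alternant_def)
    also have "\<dots> = x ^ b - y ^ b"
      using \<open>a + 2 = n\<close> assms(2,3) by simp
    finally have "alternant x y (a + 1, b) = x ^ b - y ^ b" .
    moreover have "alternant x y (b - 1, 0) = x ^ b - y ^ b" if "1 \<le> b"
      using that by (cases b) (simp_all add: alternant_def)
    ultimately show ?thesis
      using False \<open>a + 2 = n\<close> by (cases "b = 0") auto
  qed simp
  show ?thesis
    unfolding sum_c1_coeff[OF assms(1)] up right alternant_pieri ..
qed

lemma eigenvalue_c1_star_mat: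
  assumes "n \<ge> 2" and "x ^ n = -1" and "y ^ n = -1" and "x \<noteq> y"
  shows "eigenvalue (c1_star_mat n) (x + y)"
proof -
  define L where "L = gr2_parts n"
  define w where "w = vec (length L) (\<lambda>i. alternant x y (L ! i))"
  have A: "c1_star_mat n \<in> carrier_mat (length L) (length L)"
    by (simp add: c1_star_mat_def L_def)
  have "transpose_mat (c1_star_mat n) *\<^sub>v w = (x + y) \<cdot>\<^sub>v w"
  proof (rule eq_vecI)
    fix j assume "j < dim_vec ((x + y) \<cdot>\<^sub>v w)"
    then have j: "j < length L"
      by (simp add: w_def)
    obtain a b where ab: "L ! j = (a, b)"
      by fastforce
    have "(transpose_mat (c1_star_mat n) *\<^sub>v w) $ j
        = (\<Sum>p\<in>set L. c1_coeff n p (L ! j) * alternant x y p)"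
      unfolding c1_star_mat_def w_def L_def[symmetric]
      by (rule transpose_mat_mult_vec_list_indexed[OF _ j]) (simp add: L_def distinct_gr2_parts)
    also have "\<dots> = (x + y) * alternant x y (L ! j)"
      using j ab assms(2,3) nth_mem[OF j] unfolding L_def by (simp add: sum_c1_coeff_alternant)
    finally show "(transpose_mat (c1_star_mat n) *\<^sub>v w) $ j = ((x + y) \<cdot>\<^sub>v w) $ j"
      using j by (simp add: w_def)
  qed (use A in \<open>simp add: w_def\<close>)
  moreover have "(0, 0) \<in> set L"
    using assms(1) by (simp add: L_def set_gr2_parts)
  then obtain i where "i < length L" and "L ! i = (0, 0)"
    by (metis in_set_conv_nth)
  then have "w \<noteq> 0\<^sub>v (length L)"
    using assms(4) by (auto simp: w_def alternant_def dest!: arg_cong[where f = "\<lambda>v. v $ i"])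
  ultimately have "eigenvector (transpose_mat (c1_star_mat n)) w (x + y)"
    using A by (simp add: eigenvector_def w_def)
  then show ?thesis
    using A eigenvalue_transpose_mat eigenvalue_def by blast
qed

lemma unit_complex_mult_cnj_sum:
  fixes x y :: complex
  assumes "norm x = 1" and "norm y = 1"
  shows "x * y * cnj (x + y) = x + y"
proof -
  have "x * cnj x = 1" "y * cnj y = 1"
    using assms complex_norm_square[of x] complex_norm_square[of y] by simp_all
  then show ?thesis
    by (simp add: algebra_simps)
qed

lemma unit_complex_pair_determined_by_sum:
  fixes x y u v :: complex
  assumes "norm x = 1" "norm y = 1" "norm u = 1" "norm v = 1"
    and "x + y = u + v" and "x + y \<noteq> 0"
  shows "{x, y} = {u, v}"
proof -
  have "x * y = u * v"
    using unit_complex_mult_cnj_sum[OF assms(1,2)] unit_complex_mult_cnj_sum[OF assms(3,4)]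
      assms(5,6) by (metis complex_cnj_zero_iff mult_right_cancel)
  have "(u - x) * (u - y) = u * u - (x + y) * u + x * y"
    by (simp add: algebra_simps)
  also have "\<dots> = 0"
    unfolding assms(5) \<open>x * y = u * v\<close> by (simp add: algebra_simps)
  finally show ?thesis
    using assms(5) by auto
qed

lemma inj_on_sum_card_2_subsets_unit_complex:
  fixes R :: "complex set"
  assumes "\<And>z. z \<in> R \<Longrightarrow> norm z = 1" and "\<And>x y. x \<in> R \<Longrightarrow> y \<in> R \<Longrightarrow> x + y \<noteq> 0"
  shows "inj_on Sum {S. S \<subseteq> R \<and> card S = 2}"
proof (rule inj_onI)
  fix S S' assume "S \<in> {S. S \<subseteq> R \<and> card S = 2}" "S' \<in> {S. S \<subseteq> R \<and> card S = 2}" "\<Sum>S = \<Sum>S'"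
  then obtain x y u v where "S = {x, y}" "x \<noteq> y" "S' = {u, v}" "u \<noteq> v" "x + y = u + v"
    and "{x, y, u, v} \<subseteq> R"
    by (auto simp: card_2_iff)
  then show "S = S'"
    using unit_complex_pair_determined_by_sum assms by simp
qed

lemma norm_eq_1_if_power_eq_minus_1:
  fixes z :: complex
  assumes "n > 0" and "z ^ n = -1"
  shows "norm z = 1"
proof -
  have "norm z ^ n = 1"
    using assms(2) by (metis norm_minus_cancel norm_one norm_power)
  then show ?thesis
    using assms(1) power_eq_imp_eq_base[of "norm z" n 1] by simp
qed

lemma add_neq_0_if_power_eq_minus_1_odd:
  fixes x y :: complex
  assumes "odd n" and "x ^ n = -1" and "y ^ n = -1"
  shows "x + y \<noteq> 0"
proof
  assume "x + y = 0"
  then have "x = - y"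
    by (simp add: eq_neg_iff_add_eq_0)
  then have "x ^ n = - (y ^ n)"
    using assms(1) by simp
  then show False
    using assms(2,3) by simp
qed

lemma card_roots_minus_1_odd:
  assumes "odd n"
  shows "card {z::complex. z ^ n = -1} = n"
proof -
  have "{z::complex. z ^ n = -1} = uminus ` {z. z ^ n = 1}"
    using assms by (force intro: image_eqI[where x = "- _"])
  then show ?thesis
    using assms card_roots_unity_eq[of n] by (simp add: card_image odd_pos)
qed

lemma card_sums_card_2_subsets_roots_minus_1:
  assumes "odd n"
  shows "card (Sum ` {S. S \<subseteq> {z::complex. z ^ n = -1} \<and> card S = 2}) = n choose 2"
proof -
  have "inj_on Sum {S. S \<subseteq> {z::complex. z ^ n = -1} \<and> card S = 2}"
    using assms odd_pos[OF assms]
    by (intro inj_on_sum_card_2_subsets_unit_complex)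
      (auto simp: norm_eq_1_if_power_eq_minus_1 add_neq_0_if_power_eq_minus_1_odd)
  moreover have "finite {z::complex. z ^ n = -1}"
    using card_roots_minus_1_odd[OF assms] odd_pos[OF assms] by (intro card_ge_0_finite) simp
  ultimately show ?thesis
    by (simp add: card_image n_subsets card_roots_minus_1_odd[OF assms])
qed

theorem lemma4p6:
  fixes n :: nat
  assumes "n > 2" and "odd n"
  shows "\<forall>e. eigenvalue (c1_star_mat n) e \<longrightarrow> order e (char_poly (c1_star_mat n)) = 1"
proof -
  define A where "A = c1_star_mat n"
  define T where "T = {S. S \<subseteq> {z::complex. z ^ n = -1} \<and> card S = 2}"
  have A: "A \<in> carrier_mat (n choose 2) (n choose 2)"
    by (simp add: A_def c1_star_mat_def length_gr2_parts)
  have sums_roots: "Sum ` T \<subseteq> {z. poly (char_poly A) z = 0}"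
  proof
    fix e assume "e \<in> Sum ` T"
    then obtain x y where "x ^ n = -1" "y ^ n = -1" "x \<noteq> y" "e = x + y"
      by (auto simp: T_def card_2_iff)
    then show "e \<in> {z. poly (char_poly A) z = 0}"
      using assms(1) eigenvalue_c1_star_mat[of n x y] eigenvalue_root_char_poly[OF A]
      unfolding A_def by simp
  qed
  have "degree (char_poly A) = card (Sum ` T)" and "char_poly A \<noteq> 0"
    using degree_monic_char_poly[OF A] card_sums_card_2_subsets_roots_minus_1[OF assms(2)]
    unfolding T_def by auto
  then show ?thesis
    using order_eq_1_if_degree_le_card_roots[OF _ sums_roots] eigenvalue_root_char_poly[OF A]
    unfolding A_def by simp
qed

end
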